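(* Every strategyproof and pairwise social choice correspondence satisfies WMON, WSMON, IUA, and WLOC.
   Context: Let $A$ be a finite set of alternatives; a preference profile $R$ assigns a strict total order $\succ_i$ on $A$ (viewed as a set of ordered pairs) to each voter $i$ of a finite non-empty electorate $N\subseteq\{1,2,\dots\}$; $\mathcal{R}^*(A)$ is the set of all profiles over all electorates. $g_R(x,y)=|\{i: x\succ_i y\}|-|\{i: y\succ_i x\}|$. An SCC is $f:\mathcal{R}^*(A)\to 2^A\setminus\{\emptyset\}$; it is pairwise if $f(R)=f(R')$ whenever $g_R=g_{R'}$. Fishburn's extension: for $X\ne Y$, $X\succ_i^F Y$ iff $x\succ_i y$ for all $x\in X\setminus Y,y\in Y$ and for all $x\in X,y\in Y\setminus X$. $f$ is strategyproof if there are no electorate $N$, voter $i\in N$, and profiles $R,R'$ on $N$ with $\succ_j=\succ'_j$ for $j\ne i$ and $f(R')\succ_i^F f(R)$. For $B\subseteq A$, $\succ_i|_B=\succ_i\cap B^2$. In the following, $R,R'$ are profiles on the same electorate $N$ and $i\in N$ with $\succ_j=\succ'_j$ for all $j\ne i$. WMON: for all $a,b\in A$, if $\succ'_i=\succ_i\setminus\{(b,a)\}\cup\{(a,b)\}$ and $a\in f(R)$, then $a\in f(R')$ or $b\in f(R')\setminus f(R)$. WSMON: if $a\notin f(R)$, $\succ_i|_{A\setminus\{a\}}=\succ'_i|_{A\setminus\{a\}}$, $a\succ_i z$ for all $z\ne a$, and $z\succ'_i a$ for all $z\ne a$, then $f(R)=f(R')$. IUA: if there is $B\subseteq A\setminus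 f(R)$ with $\succ_i\setminus\succ_i|_B=\succ'_i\setminus\succ'_i|_B$, then $f(R)=f(R')$. WLOC: if there is $B\subseteq A$ with $\succ_i\setminus\succ_i|_B=\succ'_i\setminus\succ'_i|_B$ and $B\cap f(R)=B\cap f(R')$, then $f(R)=f(R')$. *)

theory Defs
  imports Main
begin

text \<open>Voters: natural numbers >= 1.
A profile on electorate N is represented by a pair (N, R) where R i is the strict
total order of voter i (as a set of ordered pairs) for i in N, and R i = {} for i
outside N (canonical representation).\<close>

definition strict_total_order :: "'a set \<Rightarrow> 'a rel \<Rightarrow> bool" where
  "strict_total_order A r \<longleftrightarrow> r \<subseteq> A \<times> A \<and> irrefl r \<and> trans r \<and> total_on A r"

definition is_profile :: "'a set \<Rightarrow> nat set \<Rightarrow> (nat \<Rightarrow> 'a rel) \<Rightarrow> bool" where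
  "is_profile A N R \<longleftrightarrow> finite N \<and> N \<noteq> {} \<and> 0 \<notin> N \<and>
     (\<forall>i\<in>N. strict_total_order A (R i)) \<and> (\<forall>i. i \<notin> N \<longrightarrow> R i = {})"

definition majority_margin :: "nat set \<Rightarrow> (nat \<Rightarrow> 'a rel) \<Rightarrow> 'a \<Rightarrow> 'a \<Rightarrow> int" where
  "majority_margin N R x y =
     int (card {i\<in>N. (x, y) \<in> R i}) - int (card {i\<in>N. (y, x) \<in> R i})"

definition is_SCC :: "'a set \<Rightarrow> (nat set \<Rightarrow> (nat \<Rightarrow> 'a rel) \<Rightarrow> 'a set) \<Rightarrow> bool" where
  "is_SCC A f \<longleftrightarrow> (\<forall>N R. is_profile A N R \<longrightarrow> f N R \<noteq> {} \<and> f N R \<subseteq> A)"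

definition pairwise_SCC :: "'a set \<Rightarrow> (nat set \<Rightarrow> (nat \<Rightarrow> 'a rel) \<Rightarrow> 'a set) \<Rightarrow> bool" where
  "pairwise_SCC A f \<longleftrightarrow> (\<forall>N R N' R'. is_profile A N R \<longrightarrow> is_profile A N' R' \<longrightarrow>
     majority_margin N R = majority_margin N' R' \<longrightarrow> f N R = f N' R')"

definition fishburn :: "'a rel \<Rightarrow> 'a set \<Rightarrow> 'a set \<Rightarrow> bool" where
  "fishburn r X Y \<longleftrightarrow> X \<noteq> Y \<and> (\<forall>x\<in>X - Y. \<forall>y\<in>Y. (x, y) \<in> r) \<and>
     (\<forall>x\<in>X. \<forall>y\<in>Y - X. (x, y) \<in> r)"

definition i_variant :: "'a set \<Rightarrow> nat set \<Rightarrow> nat \<Rightarrow> (nat \<Rightarrow> 'a rel) \<Rightarrow> (nat \<Rightarrow> 'a rel) \<Rightarrow> bool" where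
  "i_variant A N i R R' \<longleftrightarrow> is_profile A N R \<and> is_profile A N R' \<and> i \<in> N \<and>
     (\<forall>j\<in>N. j \<noteq> i \<longrightarrow> R j = R' j)"

definition strategyproof :: "'a set \<Rightarrow> (nat set \<Rightarrow> (nat \<Rightarrow> 'a rel) \<Rightarrow> 'a set) \<Rightarrow> bool" where
  "strategyproof A f \<longleftrightarrow> \<not> (\<exists>N i R R'. i_variant A N i R R' \<and> fishburn (R i) (f N R') (f N R))"

definition restr :: "'a rel \<Rightarrow> 'a set \<Rightarrow> 'a rel" where
  "restr r B = r \<inter> (B \<times> B)"

definition WMON :: "'a set \<Rightarrow> (nat set \<Rightarrow> (nat \<Rightarrow> 'a rel) \<Rightarrow> 'a set) \<Rightarrow> bool" where
  "WMON A f \<longleftrightarrow> (\<forall>N i R R'. i_variant A N i R R' \<longrightarrow> (\<forall>a\<in>A. \<forall>b\<in>A.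
     R' i = R i - {(b, a)} \<union> {(a, b)} \<and> a \<in> f N R \<longrightarrow>
       a \<in> f N R' \<or> b \<in> f N R' - f N R))"

definition WSMON :: "'a set \<Rightarrow> (nat set \<Rightarrow> (nat \<Rightarrow> 'a rel) \<Rightarrow> 'a set) \<Rightarrow> bool" where
  "WSMON A f \<longleftrightarrow> (\<forall>N i R R'. i_variant A N i R R' \<longrightarrow> (\<forall>a\<in>A.
     a \<notin> f N R \<and> restr (R i) (A - {a}) = restr (R' i) (A - {a}) \<and>
     (\<forall>z\<in>A. z \<noteq> a \<longrightarrow> (a, z) \<in> R i) \<and> (\<forall>z\<in>A. z \<noteq> a \<longrightarrow> (z, a) \<in> R' i) \<longrightarrow>
       f N R = f N R'))"

definition IUA :: "'a set \<Rightarrow> (nat set \<Rightarrow> (nat \<Rightarrow> 'a rel) \<Rightarrow> 'a set) \<Rightarrow> bool" where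
  "IUA A f \<longleftrightarrow> (\<forall>N i R R'. i_variant A N i R R' \<longrightarrow>
     (\<exists>B. B \<subseteq> A - f N R \<and> R i - restr (R i) B = R' i - restr (R' i) B) \<longrightarrow>
       f N R = f N R')"

definition WLOC :: "'a set \<Rightarrow> (nat set \<Rightarrow> (nat \<Rightarrow> 'a rel) \<Rightarrow> 'a set) \<Rightarrow> bool" where
  "WLOC A f \<longleftrightarrow> (\<forall>N i R R'. i_variant A N i R R' \<longrightarrow>
     (\<exists>B. B \<subseteq> A \<and> R i - restr (R i) B = R' i - restr (R' i) B \<and> B \<inter> f N R = B \<inter> f N R') \<longrightarrow>
       f N R = f N R')"

end

theory Submission
  imports Defs
begin

text \<open>A pairwise SCC sees a profile only through its majority margins. Hence voter i's switch
from R i to R' i can be imitated by a fresh voter switching from Q to Q', provided both switches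
reverse the same pairs, while a second fresh voter reporting the reverse of Q cancels the first.
Strategyproofness for the fresh voter then forbids f(R) from being Fishburn-better than f(R')
under Q'. Each of the four properties follows by building Q and Q' from a ranking of the
alternatives into blocks (roughly: f(R) - f(R') first, then f(R) \<inter> f(R'), then f(R') - f(R)),
with ties broken by R i or R' i, such that a violation would make f(R) Fishburn-better than f(R')
under Q'.\<close>

definition pref_margin :: "'a rel \<Rightarrow> 'a \<Rightarrow> 'a \<Rightarrow> int" where
  "pref_margin r x y = of_bool ((x, y) \<in> r) - of_bool ((y, x) \<in> r)"

lemma majority_margin_sum:
  assumes "finite N"
  shows "majority_margin N R x y = (\<Sum>l\<in>N. pref_margin (R l) x y)"
proof -
  have "(\<Sum>l\<in>N. pref_margin (R l) x y) =
      (\<Sum>l\<in>N. of_bool ((x, y) \<in> R l)) - (\<Sum>l\<in>N. (of_bool ((y, x) \<in> R l) :: int))"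
    by (simp add: pref_margin_def sum_subtractf)
  then show ?thesis
    using assms by (simp add: majority_margin_def Int_def conj_commute)
qed

lemma majority_margin_cong:
  assumes "\<And>l. l \<in> N \<Longrightarrow> R l = R' l"
  shows "majority_margin N R = majority_margin N R'"
  using assms unfolding majority_margin_def by (intro ext) (metis (no_types, lifting) Collect_cong)

lemma majority_margin_insert:
  assumes "finite N" and "j \<notin> N"
  shows "majority_margin (insert j N) R x y = pref_margin (R j) x y + majority_margin N R x y"
  using assms by (simp add: majority_margin_sum)

lemma majority_margin_fun_upd:
  assumes "finite N" and "i \<in> N"
  shows "majority_margin N (R(i := r)) x y =
    majority_margin N R x y - pref_margin (R i) x y + pref_margin r x y"
proof -
  have split: "majority_margin N S x y = pref_margin (S i) x y + majority_margin (N - {i}) S x y"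
    for S :: "nat \<Rightarrow> 'a rel"
    using assms majority_margin_insert[of "N - {i}" i S] by (simp add: insert_absorb)
  have "majority_margin (N - {i}) (R(i := r)) = majority_margin (N - {i}) R"
    by (rule majority_margin_cong) simp
  then show ?thesis
    using split[of "R(i := r)"] split[of R] by simp
qed

lemma pref_margin_converse: "pref_margin (r\<inverse>) x y = - pref_margin r x y"
  by (simp add: pref_margin_def)

lemma pref_margin_change_eq:
  assumes "Q' - Q = r' - r" and "Q - Q' = r - r'"
  shows "pref_margin Q' x y - pref_margin Q x y = pref_margin r' x y - pref_margin r x y"
proof -
  have "of_bool (p \<in> Q') - of_bool (p \<in> Q) = (of_bool (p \<in> r') - of_bool (p \<in> r) :: int)" for p
    using assms by (cases "p \<in> Q'"; cases "p \<in> Q"; cases "p \<in> r'"; cases "p \<in> r") auto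
  from this[of "(x, y)"] this[of "(y, x)"] show ?thesis
    unfolding pref_margin_def by linarith
qed

lemma strict_total_order_converse:
  "strict_total_order A r \<Longrightarrow> strict_total_order A (r\<inverse>)"
  unfolding strict_total_order_def irrefl_def trans_def total_on_def by blast

lemma i_variant_fun_upd: "i_variant A N i R R' \<Longrightarrow> R' = R(i := R' i)"
  unfolding i_variant_def is_profile_def by (metis fun_upd_apply ext)

lemma strategyproof_pairwise_no_fishburn_gain:
  assumes sp: "strategyproof A f" and pw: "pairwise_SCC A f"
    and iv: "i_variant A N i R R'"
    and Q: "strict_total_order A Q" and Q': "strict_total_order A Q'"
    and gain: "Q' - Q = R' i - R i" and loss: "Q - Q' = R i - R' i"
  shows "\<not> fishburn Q' (f N R) (f N R')"
proof
  assume fb: "fishburn Q' (f N R) (f N R')"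
  have pR: "is_profile A N R" and pR': "is_profile A N R'" and iN: "i \<in> N"
    using iv unfolding i_variant_def by auto
  have finN: "finite N" using pR unfolding is_profile_def by simp
  define j where "j = Max N + 1"
  define k where "k = Max N + 2"
  have j: "j \<notin> N" "j \<noteq> 0" and k: "k \<notin> insert j N" "k \<noteq> 0"
    using Max_ge[OF finN] unfolding j_def k_def by fastforce+
  txt \<open>Voters j and k cancel out, and switching j from Q to Q' changes the margins exactly
    as switching i from R i to R' i does.\<close>
  define N2 where "N2 = insert k (insert j N)"
  define T where "T = R(j := Q, k := Q\<inverse>)"
  define T' where "T' = T(j := Q')"
  have pT: "is_profile A N2 T" and pT': "is_profile A N2 T'"
    using pR Q Q' strict_total_order_converse[OF Q] j k
    unfolding is_profile_def N2_def T'_def T_def by auto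
  have N2: "finite N2" "j \<in> N2" using finN unfolding N2_def by auto
  have marginT: "majority_margin N2 T x y = majority_margin N R x y" for x y
  proof -
    have "majority_margin N T = majority_margin N R"
      using j k unfolding T_def by (intro majority_margin_cong) auto
    then show ?thesis
      using finN j k unfolding N2_def
      by (simp add: majority_margin_insert T_def pref_margin_converse)
  qed
  have "majority_margin N2 T' x y = majority_margin N R' x y" for x y
  proof -
    have "majority_margin N2 T' x y = majority_margin N R x y - pref_margin Q x y + pref_margin Q' x y"
      using majority_margin_fun_upd[OF N2, of T Q'] marginT k unfolding T'_def T_def by simp
    also have "\<dots> = majority_margin N R x y - pref_margin (R i) x y + pref_margin (R' i) x y"
      using pref_margin_change_eq[OF gain loss] by simp
    also have "\<dots> = majority_margin N R' x y"
      using finN iN i_variant_fun_upd[OF iv] by (metis majority_margin_fun_upd)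
    finally show ?thesis .
  qed
  then have "f N2 T' = f N R'" and "f N2 T = f N R"
    using pw pT pT' pR pR' marginT unfolding pairwise_SCC_def by blast+
  moreover have "i_variant A N2 j T' T"
    using pT pT' unfolding i_variant_def N2_def T'_def by auto
  ultimately show False
    using sp fb unfolding strategyproof_def T'_def by fastforce
qed

definition rank_lex :: "'a set \<Rightarrow> ('a \<Rightarrow> nat) \<Rightarrow> 'a rel \<Rightarrow> 'a rel" where
  "rank_lex A g r = {(x, y). x \<in> A \<and> y \<in> A \<and> (g x < g y \<or> g x = g y \<and> (x, y) \<in> r)}"

lemma strict_total_order_rank_lex:
  assumes "strict_total_order A r"
  shows "strict_total_order A (rank_lex A g r)"
  unfolding strict_total_order_def
proof (intro conjI)
  have irr: "irrefl r" and tr: "trans r" and tot: "total_on A r"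
    using assms unfolding strict_total_order_def by auto
  show "rank_lex A g r \<subseteq> A \<times> A" by (auto simp: rank_lex_def)
  show "irrefl (rank_lex A g r)" using irr by (auto simp: rank_lex_def irrefl_def)
  show "trans (rank_lex A g r)" using tr by (auto simp: rank_lex_def trans_def)
  show "total_on A (rank_lex A g r)" using tot by (auto simp: rank_lex_def total_on_def)
qed

lemma rank_lex_diff:
  assumes "strict_total_order A r" and "strict_total_order A r'" and "r' - r \<subseteq> B \<times> B"
    and "\<And>x y. x \<in> B \<Longrightarrow> y \<in> B \<Longrightarrow> g x = g y"
  shows "rank_lex A g r' - rank_lex A g r = r' - r"
  using assms unfolding strict_total_order_def rank_lex_def by fastforce

lemma rank_lex_less: "x \<in> A \<Longrightarrow> y \<in> A \<Longrightarrow> g x < g y \<Longrightarrow> (x, y) \<in> rank_lex A g r"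
  by (simp add: rank_lex_def)

lemma restr_rank_lex_cong:
  "(\<And>x. x \<in> B \<Longrightarrow> g x = h x) \<Longrightarrow> restr (rank_lex A g r) B = restr (rank_lex A h r) B"
  unfolding restr_def rank_lex_def by auto

lemma fishburn_rank_lex:
  assumes "X \<noteq> Y" and "X \<subseteq> A" and "Y \<subseteq> A"
    and "\<And>x y. x \<in> X - Y \<Longrightarrow> y \<in> Y \<Longrightarrow> g x < g y"
    and "\<And>x y. x \<in> X \<Longrightarrow> y \<in> Y - X \<Longrightarrow> g x < g y"
  shows "fishburn (rank_lex A g r) X Y"
  using assms unfolding fishburn_def by (blast intro: rank_lex_less)

lemma i_variant_strict_total_order:
  assumes "i_variant A N i R R'"
  shows "strict_total_order A (R i)" and "strict_total_order A (R' i)"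
  using assms unfolding i_variant_def is_profile_def by auto

lemma i_variant_SCC_subset:
  assumes "is_SCC A f" and "i_variant A N i R R'"
  shows "f N R \<subseteq> A" and "f N R' \<subseteq> A"
  using assms unfolding is_SCC_def i_variant_def by auto

lemma strategyproof_pairwise_no_fishburn_gain_rank_lex:
  assumes "strategyproof A f" and "pairwise_SCC A f" and iv: "i_variant A N i R R'"
    and changes: "R' i - R i \<subseteq> B \<times> B" "R i - R' i \<subseteq> B \<times> B"
    and g_B: "\<And>x y. x \<in> B \<Longrightarrow> y \<in> B \<Longrightarrow> g x = g y"
  shows "\<not> fishburn (rank_lex A g (R' i)) (f N R) (f N R')"
proof -
  note r = i_variant_strict_total_order[OF iv]
  show ?thesis
    using assms(1-3) strict_total_order_rank_lex[OF r(1)] strict_total_order_rank_lex[OF r(2)]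
      rank_lex_diff[OF r changes(1) g_B] rank_lex_diff[OF r(2,1) changes(2) g_B]
    by (rule strategyproof_pairwise_no_fishburn_gain)
qed

lemma top_to_bottom_diff:
  assumes r: "strict_total_order A r" and r': "strict_total_order A r'"
    and same: "restr r (A - {a}) = restr r' (A - {a})"
    and top: "\<forall>z\<in>A. z \<noteq> a \<longrightarrow> (a, z) \<in> r" and bot: "\<forall>z\<in>A. z \<noteq> a \<longrightarrow> (z, a) \<in> r'"
  shows "r' - r = (A - {a}) \<times> {a}" and "r - r' = {a} \<times> (A - {a})"
proof -
  have asym: "(y, x) \<notin> s" if "strict_total_order A s" "(x, y) \<in> s" for s x y
    using that unfolding strict_total_order_def irrefl_def trans_def by blast
  have field: "r \<subseteq> A \<times> A" "r' \<subseteq> A \<times> A" and irr: "(a, a) \<notin> r" "(a, a) \<notin> r'"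
    using r r' unfolding strict_total_order_def irrefl_def by auto
  have off_a: "(x, y) \<in> r \<longleftrightarrow> (x, y) \<in> r'" if "x \<noteq> a" "y \<noteq> a" for x y
    using same field that unfolding restr_def by blast
  have gained: "(x, y) \<in> r' - r \<longleftrightarrow> x \<in> A - {a} \<and> y = a" for x y
  proof
    assume xy: "(x, y) \<in> r' - r"
    then have "x \<in> A" "y \<in> A" using field by auto
    show "x \<in> A - {a} \<and> y = a"
    proof (cases "x = a")
      case True
      with xy irr \<open>y \<in> A\<close> bot have "(y, x) \<in> r'" by auto
      with xy asym[OF r'] show ?thesis by blast
    next
      case False
      with xy off_a[of x y] \<open>x \<in> A\<close> show ?thesis by blast
    qed
  next
    assume "x \<in> A - {a} \<and> y = a"
    then show "(x, y) \<in> r' - r" using top bot asym[OF r] by blast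
  qed
  have lost: "(x, y) \<in> r - r' \<longleftrightarrow> x = a \<and> y \<in> A - {a}" for x y
  proof
    assume xy: "(x, y) \<in> r - r'"
    then have "x \<in> A" "y \<in> A" using field by auto
    show "x = a \<and> y \<in> A - {a}"
    proof (cases "y = a")
      case True
      with xy irr \<open>x \<in> A\<close> top have "(y, x) \<in> r" by auto
      with xy asym[OF r] show ?thesis by blast
    next
      case False
      with xy off_a[of x y] \<open>y \<in> A\<close> show ?thesis by blast
    qed
  next
    assume "x = a \<and> y \<in> A - {a}"
    then show "(x, y) \<in> r - r'" using top bot asym[OF r'] by blast
  qed
  show "r' - r = (A - {a}) \<times> {a}" and "r - r' = {a} \<times> (A - {a})"
    using gained lost by auto
qed

lemma strategyproof_pairwise_local_invariance:
  assumes scc: "is_SCC A f" and sp: "strategyproof A f" and pw: "pairwise_SCC A f"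
    and iv: "i_variant A N i R R'"
    and local: "R i - restr (R i) B = R' i - restr (R' i) B"
    and winners: "B \<inter> f N R = {} \<or> B \<inter> f N R = B \<inter> f N R'"
  shows "f N R = f N R'"
proof (rule ccontr)
  assume ne: "f N R \<noteq> f N R'"
  define X where "X = f N R"
  define Y where "Y = f N R'"
  have changes: "R' i - R i \<subseteq> B \<times> B" "R i - R' i \<subseteq> B \<times> B"
    using local unfolding restr_def by blast+
  define g :: "'a \<Rightarrow> nat" where "g x =
    (if x \<in> B then 2 else if x \<in> X - Y then 0 else if x \<in> X then 1 else if x \<in> Y then 3 else 4)" for x
  have g_B: "g x = g y" if "x \<in> B" "y \<in> B" for x y
    using that unfolding g_def by simp
  have "\<not> fishburn (rank_lex A g (R' i)) X Y"
    unfolding X_def Y_def using strategyproof_pairwise_no_fishburn_gain_rank_lex[OF sp pw iv changes g_B] .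
  moreover have "fishburn (rank_lex A g (R' i)) X Y"
    using ne winners i_variant_SCC_subset[OF scc iv]
    by (intro fishburn_rank_lex) (auto simp: X_def Y_def g_def)
  ultimately show False ..
qed

lemma strategyproof_pairwise_IUA:
  assumes "is_SCC A f" and "strategyproof A f" and "pairwise_SCC A f"
  shows "IUA A f"
  unfolding IUA_def using strategyproof_pairwise_local_invariance[OF assms] by blast

lemma strategyproof_pairwise_WLOC:
  assumes "is_SCC A f" and "strategyproof A f" and "pairwise_SCC A f"
  shows "WLOC A f"
  unfolding WLOC_def using strategyproof_pairwise_local_invariance[OF assms] by blast

lemma strategyproof_pairwise_WMON:
  assumes scc: "is_SCC A f" and sp: "strategyproof A f" and pw: "pairwise_SCC A f"
  shows "WMON A f"
  unfolding WMON_def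
proof (intro allI impI ballI, elim conjE)
  fix N i R R' a b
  assume iv: "i_variant A N i R R'" and "a \<in> A" "b \<in> A"
    and lift: "R' i = R i - {(b, a)} \<union> {(a, b)}" and a_win: "a \<in> f N R"
  show "a \<in> f N R' \<or> b \<in> f N R' - f N R"
  proof (rule ccontr)
    assume lost: "\<not> (a \<in> f N R' \<or> b \<in> f N R' - f N R)"
    define X where "X = f N R"
    define Y where "Y = f N R'"
    have changes: "R' i - R i \<subseteq> {a, b} \<times> {a, b}" "R i - R' i \<subseteq> {a, b} \<times> {a, b}"
      using lift by auto
    txt \<open>a and b share a rank, so the tie between them is broken as in R' i, in favour of a.\<close>
    define g :: "'a \<Rightarrow> nat" where "g x =
      (if x \<in> {a, b} then 1 else if x \<in> X - Y then 0 else if x \<in> X then 2 else if x \<in> Y then 3 else 4)"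
      for x
    have g_ab: "g x = g y" if "x \<in> {a, b}" "y \<in> {a, b}" for x y
      using that unfolding g_def by simp
    have "\<not> fishburn (rank_lex A g (R' i)) X Y"
      unfolding X_def Y_def using strategyproof_pairwise_no_fishburn_gain_rank_lex[OF sp pw iv changes g_ab] .
    moreover have "fishburn (rank_lex A g (R' i)) X Y"
      using lost a_win lift \<open>a \<in> A\<close> \<open>b \<in> A\<close> i_variant_SCC_subset[OF scc iv]
      unfolding fishburn_def rank_lex_def X_def Y_def g_def by auto
    ultimately show False ..
  qed
qed

lemma strategyproof_pairwise_WSMON:
  assumes scc: "is_SCC A f" and sp: "strategyproof A f" and pw: "pairwise_SCC A f"
  shows "WSMON A f"
  unfolding WSMON_def
proof (intro allI impI ballI, elim conjE)
  fix N i R R' a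
  assume iv: "i_variant A N i R R'" and "a \<in> A" and a_lose: "a \<notin> f N R"
    and same: "restr (R i) (A - {a}) = restr (R' i) (A - {a})"
    and top: "\<forall>z\<in>A. z \<noteq> a \<longrightarrow> (a, z) \<in> R i" and bot: "\<forall>z\<in>A. z \<noteq> a \<longrightarrow> (z, a) \<in> R' i"
  show "f N R = f N R'"
  proof (rule ccontr)
    assume ne: "f N R \<noteq> f N R'"
    define X where "X = f N R"
    define Y where "Y = f N R'"
    note r = i_variant_strict_total_order[OF iv]
    define g :: "'a \<Rightarrow> nat" where "g x = (if x \<in> X - Y then 1 else if x \<in> X then 2 else 3)" for x
    define Q where "Q = rank_lex A (g(a := 0)) (R i)"
    define Q' where "Q' = rank_lex A (g(a := 4)) (R i)"
    have Q: "strict_total_order A Q" and Q': "strict_total_order A Q'"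
      unfolding Q_def Q'_def using strict_total_order_rank_lex r by blast+
    have "restr Q (A - {a}) = restr Q' (A - {a})"
      unfolding Q_def Q'_def by (rule restr_rank_lex_cong) simp
    moreover have "\<forall>z\<in>A. z \<noteq> a \<longrightarrow> (a, z) \<in> Q" "\<forall>z\<in>A. z \<noteq> a \<longrightarrow> (z, a) \<in> Q'"
      using \<open>a \<in> A\<close> unfolding Q_def Q'_def g_def by (auto intro: rank_lex_less)
    ultimately have "Q' - Q = R' i - R i" "Q - Q' = R i - R' i"
      using top_to_bottom_diff[OF Q Q'] top_to_bottom_diff[OF r same top bot] by simp_all
    then have "\<not> fishburn Q' X Y"
      using strategyproof_pairwise_no_fishburn_gain[OF sp pw iv Q Q']
    unfolding X_def Y_def by blast
    moreover have "fishburn Q' X Y"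
      unfolding Q'_def using ne a_lose i_variant_SCC_subset[OF scc iv]
      by (intro fishburn_rank_lex) (auto simp: X_def Y_def g_def)
    ultimately show False ..
  qed
qed

theorem lemma4:
  fixes A :: "'a set" and f :: "nat set \<Rightarrow> (nat \<Rightarrow> 'a rel) \<Rightarrow> 'a set"
  assumes "finite A" and "is_SCC A f" and "strategyproof A f" and "pairwise_SCC A f"
  shows "WMON A f \<and> WSMON A f \<and> IUA A f \<and> WLOC A f"
  using assms(2-4) strategyproof_pairwise_WMON strategyproof_pairwise_WSMON
    strategyproof_pairwise_IUA strategyproof_pairwise_WLOC by blast

end
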